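(* Let $E$ be an irreducible IL FS encoder with $s$ states. Then for every positive integer $\ell$ there exists a state $z\in\mathcal{Z}$ such that $$\sum_{x^\ell\in\mathcal{X}^\ell}2^{-L[f(z,x^\ell)]}\le 1.$$
   Context: A finite-state (FS) encoder is a quintuple $E=(\mathcal{X},\mathcal{Y},\mathcal{Z},f,g)$, where $\mathcal{X}$ is a finite source alphabet of size $\alpha$, $\mathcal{Y}$ is a finite set of binary strings (possibly containing the empty string, of length $0$), $\mathcal{Z}$ is a finite set of $s$ states, $f:\mathcal{Z}\times\mathcal{X}\to\mathcal{Y}$ is the output function and $g:\mathcal{Z}\times\mathcal{X}\to\mathcal{Z}$ is the next-state function. For $z\in\mathcal{Z}$ and $x^n=(x_1,\dots,x_n)\in\mathcal{X}^n$, set $z_1=z$, $z_{i+1}=g(z_i,x_i)$; write $g(z,x^n)=z_{n+1}$ and let $f(z,x^n)$ denote the binary string obtained by concatenating $f(z_1,x_1),\dots,f(z_n,x_n)$; its length is $L[f(z,x^n)]=\sum_{i=1}^n L[f(z_i,x_i)]$, where $L(\cdot)$ denotes the length of a binary string. The encoder is information lossless (IL) if for every $z\in\mathcal{Z}$ and every $n\ge1$, the map $x^n\mapsto (f(z,x^n),g(z,x^n))$ is injective on $\mathcal{X}^n$. The Kraft matrix of $E$ is the $s\times s$ nonnegative matrix $K$ with entries $K_{zz'}=\sum_{\{x\in\mathcal{X}:\ g(z,x)=z'\}}2^{-L[f(z,x)]}$. The encoder is called irreducible if $K$ is an irreducible matrix, equivalently, if for every $z,z'\in\mathcal{Z}$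 there exist $n\ge 1$ and $x^n$ with $g(z,x^n)=z'$. *)

theory Defs
  imports Complex_Main
begin

text \<open>Finite-state encoder with source alphabet X, state set Z,
  output function f (binary strings as bool lists) and next-state function g.\<close>

definition fs_encoder :: "'x set \<Rightarrow> 'z set \<Rightarrow> ('z \<Rightarrow> 'x \<Rightarrow> bool list) \<Rightarrow> ('z \<Rightarrow> 'x \<Rightarrow> 'z) \<Rightarrow> bool" where
  "fs_encoder X Z f g \<longleftrightarrow> finite X \<and> X \<noteq> {} \<and> finite Z \<and> Z \<noteq> {} \<and>
     (\<forall>z\<in>Z. \<forall>x\<in>X. g z x \<in> Z)"

fun out_seq :: "('z \<Rightarrow> 'x \<Rightarrow> bool list) \<Rightarrow> ('z \<Rightarrow> 'x \<Rightarrow> 'z) \<Rightarrow> 'z \<Rightarrow> 'x list \<Rightarrow> bool list" where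
  "out_seq f g z [] = []"
| "out_seq f g z (x # xs) = f z x @ out_seq f g (g z x) xs"

fun state_seq :: "('z \<Rightarrow> 'x \<Rightarrow> 'z) \<Rightarrow> 'z \<Rightarrow> 'x list \<Rightarrow> 'z" where
  "state_seq g z [] = z"
| "state_seq g z (x # xs) = state_seq g (g z x) xs"

definition words :: "'x set \<Rightarrow> nat \<Rightarrow> 'x list set" where
  "words X n = {xs. length xs = n \<and> set xs \<subseteq> X}"

definition info_lossless :: "'x set \<Rightarrow> 'z set \<Rightarrow> ('z \<Rightarrow> 'x \<Rightarrow> bool list) \<Rightarrow> ('z \<Rightarrow> 'x \<Rightarrow> 'z) \<Rightarrow> bool" where
  "info_lossless X Z f g \<longleftrightarrow>
     (\<forall>z\<in>Z. \<forall>n\<ge>1. inj_on (\<lambda>xs. (out_seq f g z xs, state_seq g z xs)) (words X n))"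

definition irreducible_enc :: "'x set \<Rightarrow> 'z set \<Rightarrow> ('z \<Rightarrow> 'x \<Rightarrow> 'z) \<Rightarrow> bool" where
  "irreducible_enc X Z g \<longleftrightarrow>
     (\<forall>z\<in>Z. \<forall>z'\<in>Z. \<exists>n\<ge>1. \<exists>xs\<in>words X n. state_seq g z xs = z')"

end

theory Submission
  imports Defs
begin

text \<open>Let \<open>z\<^sub>0\<close> minimise the Kraft sum \<open>c\<close> of the words of length \<open>\<ell>\<close>.
  Splitting a word of length \<open>m\<ell>\<close> into \<open>m\<close> blocks of length \<open>\<ell>\<close> shows that the
  Kraft sum of \<open>z\<^sub>0\<close> at length \<open>m\<ell>\<close> is at least \<open>c\<^sup>m\<close>. On the other hand,
  information losslessness makes \<open>x\<^sup>n \<mapsto> (f(z,x\<^sup>n), g(z,x\<^sup>n))\<close> injective into pairs of a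
  binary string of length at most \<open>n L\<^sub>m\<^sub>a\<^sub>x\<close> and a state, and the binary strings of
  each fixed length have total weight 1; so the Kraft sum at length \<open>n\<close> grows at
  most linearly in \<open>n\<close>. Hence \<open>c \<le> 1\<close>.\<close>

lemma out_seq_append:
  "out_seq f g z (xs @ ys) = out_seq f g z xs @ out_seq f g (state_seq g z xs) ys"
  by (induction xs arbitrary: z) auto

lemma state_seq_closed:
  assumes "\<forall>z\<in>Z. \<forall>x\<in>X. g z x \<in> Z" "z \<in> Z" "set xs \<subseteq> X"
  shows "state_seq g z xs \<in> Z"
  using assms by (induction xs arbitrary: z) auto

lemma length_out_seq_le:
  assumes "\<forall>z\<in>Z. \<forall>x\<in>X. g z x \<in> Z" "z \<in> Z" "set xs \<subseteq> X"
    and "\<And>z x. z \<in> Z \<Longrightarrow> x \<in> X \<Longrightarrow> length (f z x) \<le> Lm"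
  shows "length (out_seq f g z xs) \<le> length xs * Lm"
  using assms(2,3)
proof (induction xs arbitrary: z)
  case (Cons x xs)
  then have "length (f z x) \<le> Lm" "length (out_seq f g (g z x) xs) \<le> length xs * Lm"
    using assms(1,4) by auto
  then show ?case by simp
qed simp

lemma words_add_eq_image_append:
  "words X (a + b) = (\<lambda>(u, v). u @ v) ` (words X a \<times> words X b)"
proof
  show "words X (a + b) \<subseteq> (\<lambda>(u, v). u @ v) ` (words X a \<times> words X b)"
  proof
    fix xs assume "xs \<in> words X (a + b)"
    then have "take a xs \<in> words X a" "drop a xs \<in> words X b"
      unfolding words_def by (auto dest: in_set_takeD in_set_dropD)
    then show "xs \<in> (\<lambda>(u, v). u @ v) ` (words X a \<times> words X b)"
      by (intro rev_image_eqI[of "(take a xs, drop a xs)"]) auto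
  qed
qed (auto simp: words_def)

lemma inj_on_append_words: "inj_on (\<lambda>(u, v). u @ v) (words X a \<times> words X b)"
  by (auto simp: inj_on_def words_def)

definition kraft_sum ::
    "'x set \<Rightarrow> ('z \<Rightarrow> 'x \<Rightarrow> bool list) \<Rightarrow> ('z \<Rightarrow> 'x \<Rightarrow> 'z) \<Rightarrow> 'z \<Rightarrow> nat \<Rightarrow> real" where
  "kraft_sum X f g z n = (\<Sum>xs\<in>words X n. 2 powr - real (length (out_seq f g z xs)))"

lemma kraft_sum_add:
  "kraft_sum X f g z (a + b) =
    (\<Sum>u\<in>words X a. 2 powr - real (length (out_seq f g z u)) * kraft_sum X f g (state_seq g z u) b)"
proof -
  have "kraft_sum X f g z (a + b) =
      (\<Sum>u\<in>words X a. \<Sum>v\<in>words X b. 2 powr - real (length (out_seq f g z (u @ v))))"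
    unfolding kraft_sum_def words_add_eq_image_append
    by (subst sum.reindex[OF inj_on_append_words]) (simp add: sum.cartesian_product' case_prod_beta)
  then show ?thesis
    by (simp add: kraft_sum_def out_seq_append powr_add[symmetric] sum_distrib_left algebra_simps)
qed

lemma power_le_kraft_sum:
  assumes closed: "\<forall>z\<in>Z. \<forall>x\<in>X. g z x \<in> Z" and "0 \<le> c"
    and lower: "\<forall>z\<in>Z. c \<le> kraft_sum X f g z l" and "z \<in> Z"
  shows "c ^ m \<le> kraft_sum X f g z (l * m)"
  using \<open>z \<in> Z\<close>
proof (induction m arbitrary: z)
  case 0
  have "words X 0 = {[]}" by (auto simp: words_def)
  then show ?case by (simp add: kraft_sum_def)
next
  case (Suc m)
  let ?w = "\<lambda>u. 2 powr - real (length (out_seq f g z u))"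
  have "c ^ Suc m \<le> kraft_sum X f g z l * c ^ m"
    using lower Suc.prems \<open>0 \<le> c\<close> by (simp add: mult_right_mono)
  also have "\<dots> = (\<Sum>u\<in>words X l. ?w u * c ^ m)"
    by (simp add: kraft_sum_def sum_distrib_right)
  also have "\<dots> \<le> (\<Sum>u\<in>words X l. ?w u * kraft_sum X f g (state_seq g z u) (l * m))"
  proof (rule sum_mono)
    fix u assume "u \<in> words X l"
    then have "state_seq g z u \<in> Z"
      using state_seq_closed[OF closed Suc.prems] by (auto simp: words_def)
    then show "?w u * c ^ m \<le> ?w u * kraft_sum X f g (state_seq g z u) (l * m)"
      using Suc.IH by (simp add: mult_left_mono)
  qed
  also have "\<dots> = kraft_sum X f g z (l * Suc m)"
    by (simp add: kraft_sum_add[symmetric])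
  finally show ?case .
qed

lemma sum_bool_lists_length_eq: "(\<Sum>w\<in>{w::bool list. length w = k}. 2 powr - real (length w)) = 1"
proof -
  have "card {w::bool list. length w = k} = 2 ^ k"
    using card_lists_length_eq[of "UNIV :: bool set" k] by simp
  then show ?thesis by (simp add: powr_minus powr_realpow)
qed

lemma sum_bool_lists_length_le:
  "(\<Sum>w\<in>{w::bool list. length w \<le> N}. 2 powr - real (length w)) = real N + 1"
proof -
  have "{w::bool list. length w \<le> N} = (\<Union>k\<le>N. {w. length w = k})" by auto
  moreover have "finite {w::bool list. length w = k}" for k
    using finite_lists_length_eq[of "UNIV :: bool set" k] by simp
  ultimately have "(\<Sum>w\<in>{w::bool list. length w \<le> N}. 2 powr - real (length w)) =
      (\<Sum>k\<le>N. \<Sum>w\<in>{w::bool list. length w = k}. 2 powr - real (length w))"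
    by (simp only:) (rule sum.UNION_disjoint; auto)
  then show ?thesis by (simp only: sum_bool_lists_length_eq) simp
qed

lemma sum_inj_bool_lists_le:
  assumes "inj_on p A" "p ` A \<subseteq> {w::bool list. length w \<le> N} \<times> S" "finite S"
  shows "(\<Sum>a\<in>A. 2 powr - real (length (fst (p a)))) \<le> real (card S) * (real N + 1)"
proof -
  have fin: "finite ({w::bool list. length w \<le> N} \<times> S)"
    using finite_lists_length_le[of "UNIV :: bool set" N] \<open>finite S\<close> by simp
  have "(\<Sum>a\<in>A. 2 powr - real (length (fst (p a)))) = (\<Sum>q\<in>p ` A. 2 powr - real (length (fst q)))"
    by (simp add: sum.reindex[OF assms(1)])
  also have "\<dots> \<le> (\<Sum>q\<in>{w::bool list. length w \<le> N} \<times> S. 2 powr - real (length (fst q)))"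
    by (rule sum_mono2[OF fin assms(2)]) simp
  also have "\<dots> = real (card S) * (real N + 1)"
    by (simp add: sum.cartesian_product' sum_distrib_left[symmetric] sum_bool_lists_length_le)
  finally show ?thesis .
qed

lemma kraft_sum_le_linear:
  assumes enc: "fs_encoder X Z f g" and "info_lossless X Z f g" and "z \<in> Z" "n \<ge> 1"
    and bound: "\<And>z x. z \<in> Z \<Longrightarrow> x \<in> X \<Longrightarrow> length (f z x) \<le> Lm"
  shows "kraft_sum X f g z n \<le> real (card Z) * (real (n * Lm) + 1)"
proof -
  let ?p = "\<lambda>xs. (out_seq f g z xs, state_seq g z xs)"
  have closed: "\<forall>z\<in>Z. \<forall>x\<in>X. g z x \<in> Z" and "finite Z"
    using enc by (auto simp: fs_encoder_def)
  have "inj_on ?p (words X n)"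
    using assms(2-4) by (auto simp: info_lossless_def)
  moreover have "?p ` words X n \<subseteq> {w. length w \<le> n * Lm} \<times> Z"
    using length_out_seq_le[OF closed \<open>z \<in> Z\<close> _ bound] state_seq_closed[OF closed \<open>z \<in> Z\<close>]
    by (auto simp: words_def)
  ultimately show ?thesis
    using sum_inj_bool_lists_le[of ?p _ "n * Lm" Z] \<open>finite Z\<close> by (simp add: kraft_sum_def)
qed

lemma kraft_sum_linear_growth:
  assumes "fs_encoder X Z f g" and "info_lossless X Z f g"
  obtains A where "\<And>z n. z \<in> Z \<Longrightarrow> n \<ge> 1 \<Longrightarrow> kraft_sum X f g z n \<le> A * real n + real (card Z)"
proof -
  have "finite ((\<lambda>(z, x). length (f z x)) ` (Z \<times> X))"
    using assms(1) by (simp add: fs_encoder_def)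
  then obtain Lm where "\<And>z x. z \<in> Z \<Longrightarrow> x \<in> X \<Longrightarrow> length (f z x) \<le> Lm"
    by (fastforce simp: finite_nat_set_iff_bounded_le)
  from kraft_sum_le_linear[OF assms _ _ this] show thesis
    by (intro that[of "real (card Z * Lm)"]) (simp add: algebra_simps)
qed

lemma linear_less_power_eventually:
  fixes A B c :: real
  assumes "c > 1"
  shows "\<forall>\<^sub>F m in sequentially. A * real m + B < c ^ m"
proof -
  have "(\<lambda>m. A * (real m / c ^ m) + B * inverse c ^ m) \<longlonglongrightarrow> A * 0 + B * 0"
    using assms by (intro tendsto_intros lim_n_over_pown LIMSEQ_power_zero) (auto simp: field_simps)
  then have "\<forall>\<^sub>F m in sequentially. A * (real m / c ^ m) + B * inverse c ^ m < 1"
    by (intro order_tendstoD(2)) auto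
  then show ?thesis
  proof (rule eventually_mono)
    fix m assume "A * (real m / c ^ m) + B * inverse c ^ m < 1"
    moreover have "c ^ m > 0" using assms by simp
    moreover have "A * real m + B = (A * (real m / c ^ m) + B * inverse c ^ m) * c ^ m"
      using assms by (simp add: field_simps)
    ultimately show "A * real m + B < c ^ m"
      by (simp only: mult_less_cancel_right2) auto
  qed
qed

theorem mainTheorem4:
  fixes X :: "'x set" and Z :: "'z set"
    and f :: "'z \<Rightarrow> 'x \<Rightarrow> bool list" and g :: "'z \<Rightarrow> 'x \<Rightarrow> 'z"
    and l :: nat
  assumes "fs_encoder X Z f g"
    and "info_lossless X Z f g"
    and "irreducible_enc X Z g"
    and "l \<ge> 1"
  shows "\<exists>z\<in>Z. (\<Sum>xs\<in>words X l. (2::real) powr (- real (length (out_seq f g z xs)))) \<le> 1"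
proof -
  have "finite Z" "Z \<noteq> {}" and closed: "\<forall>z\<in>Z. \<forall>x\<in>X. g z x \<in> Z"
    using assms(1) by (auto simp: fs_encoder_def)
  define z0 where "z0 = arg_min_on (\<lambda>z. kraft_sum X f g z l) Z"
  have "z0 \<in> Z" and min: "\<forall>z\<in>Z. kraft_sum X f g z0 l \<le> kraft_sum X f g z l"
    unfolding z0_def using \<open>finite Z\<close> \<open>Z \<noteq> {}\<close> by (auto simp: arg_min_if_finite(1) intro: arg_min_least)
  obtain A where linear: "\<And>z n. z \<in> Z \<Longrightarrow> n \<ge> 1 \<Longrightarrow> kraft_sum X f g z n \<le> A * real n + real (card Z)"
    using kraft_sum_linear_growth[OF assms(1,2)] by blast
  define c where "c = kraft_sum X f g z0 l"
  have "c \<le> 1"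
  proof (rule ccontr)
    assume "\<not> c \<le> 1"
    then have "\<forall>\<^sub>F m in sequentially. A * real l * real m + real (card Z) < c ^ m \<and> m \<ge> 1"
      by (intro eventually_conj linear_less_power_eventually eventually_ge_at_top) simp
    then obtain m where "A * real l * real m + real (card Z) < c ^ m" "m \<ge> 1"
      by (auto simp: eventually_sequentially)
    moreover have "c ^ m \<le> kraft_sum X f g z0 (l * m)"
      using power_le_kraft_sum[OF closed _ _ \<open>z0 \<in> Z\<close>] min \<open>\<not> c \<le> 1\<close> by (simp add: c_def)
    moreover have "kraft_sum X f g z0 (l * m) \<le> A * real l * real m + real (card Z)"
      using linear[OF \<open>z0 \<in> Z\<close>, of "l * m"] \<open>m \<ge> 1\<close> \<open>l \<ge> 1\<close> by (simp add: one_le_mult_iff mult.assoc)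
    ultimately show False by simp
  qed
  then show ?thesis
    using \<open>z0 \<in> Z\<close> by (auto simp: c_def kraft_sum_def)
qed

end
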